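(* If a quasi-discrete closure model $\mathcal{M}=((X,\mathcal{C}_R),\mathcal{V})$ is finitely closed and finitely backward closed, then for all $x_1,x_2\in X$, $x_1\equiv_{SLCS}x_2$ implies $x_1\simeq x_2$.
   Context: Quasi-discrete closure model: $\mathcal{C}_R(A)=A\cup\{x\mid\exists a\in A.\ aRx\}$, $\vec{\mathcal{C}}(x)=\mathcal{C}_R(\{x\})$, $\overleftarrow{\mathcal{C}}(x)=\mathcal{C}_{R^{-1}}(\{x\})$, $\mathcal{V}:AP\to\mathcal{P}(X)$, $\mathcal{V}^{-1}(x)=\{p\mid x\in\mathcal{V}(p)\}$; finitely (backward) closed: all $\vec{\mathcal{C}}(x)$ (resp. $\overleftarrow{\mathcal{C}}(x)$) finite. A function $f$ between closure spaces $(X_1,\mathcal{C}_1),(X_2,\mathcal{C}_2)$ is continuous if $f[\mathcal{C}_1(A)]\subseteq\mathcal{C}_2(f[A])$ for all $A$. A path is a continuous function $\pi:(\mathbb{N},\mathcal{C}_{succ})\to(X,\mathcal{C}_R)$, where $\mathcal{C}_{succ}$ is the closure based on the successor relation $\{(n,n+1)\}$. SLCS formulas: $\Phi::=p\mid\neg\Phi\mid\Phi\lor\Phi\mid\vec\rho\,\Phi_1[\Phi_2]\mid\overleftarrow\rho\,\Phi_1[\Phi_2]$ with $p\in AP$. Semantics: $x\models p$ iff $x\in\mathcal{V}(p)$; Boolean cases standard; $x\models\vec\rho\,\Phi_1[\Phi_2]$ iff there are a path $\pi$ and $\ell\in\mathbb{N}$ with $\pi(0)=x$, $\pi(\ell)\models\Phi_1$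 and $\pi(j)\models\Phi_2$ for all $0<j<\ell$; $x\models\overleftarrow\rho\,\Phi_1[\Phi_2]$ iff there are a path $\pi$ and $\ell$ with $\pi(\ell)=x$, $\pi(0)\models\Phi_1$ and $\pi(j)\models\Phi_2$ for all $0<j<\ell$. $x_1\equiv_{SLCS}x_2$ iff they satisfy the same SLCS formulas. Class-based bisimilarity $\simeq$: union of all non-empty equivalence relations $B$ such that $(x_1,x_2)\in B$ implies $\mathcal{V}^{-1}(x_1)=\mathcal{V}^{-1}(x_2)$ and for all $C\in X/B$, $\vec{\mathcal{C}}(x_1)\cap C\neq\emptyset\iff\vec{\mathcal{C}}(x_2)\cap C\neq\emptyset$ and $\overleftarrow{\mathcal{C}}(x_1)\cap C\neq\emptyset\iff\overleftarrow{\mathcal{C}}(x_2)\cap C\neq\emptyset$. *)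

theory Defs
  imports Main
begin

text \<open>Closure operator induced by a relation R (quasi-discrete closure).
  The carrier X of the model is the universe of the type 'a.\<close>
definition clos :: "('a \<times> 'a) set \<Rightarrow> 'a set \<Rightarrow> 'a set" where
  "clos R A = A \<union> {x. \<exists>a\<in>A. (a, x) \<in> R}"

definition fwd_clos :: "('a \<times> 'a) set \<Rightarrow> 'a \<Rightarrow> 'a set" where
  "fwd_clos R x = clos R {x}"

definition bwd_clos :: "('a \<times> 'a) set \<Rightarrow> 'a \<Rightarrow> 'a set" where
  "bwd_clos R x = clos (R\<inverse>) {x}"

definition Vinv :: "('p \<Rightarrow> 'a set) \<Rightarrow> 'a \<Rightarrow> 'p set" where
  "Vinv V x = {p. x \<in> V p}"

definition finitely_closed :: "('a \<times> 'a) set \<Rightarrow> bool" where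
  "finitely_closed R \<longleftrightarrow> (\<forall>x. finite (fwd_clos R x))"

definition finitely_backward_closed :: "('a \<times> 'a) set \<Rightarrow> bool" where
  "finitely_backward_closed R \<longleftrightarrow> (\<forall>x. finite (bwd_clos R x))"

definition continuous_clos :: "('a set \<Rightarrow> 'a set) \<Rightarrow> ('b set \<Rightarrow> 'b set) \<Rightarrow> ('a \<Rightarrow> 'b) \<Rightarrow> bool" where
  "continuous_clos C1 C2 f \<longleftrightarrow> (\<forall>A. f ` (C1 A) \<subseteq> C2 (f ` A))"

definition succ_rel :: "(nat \<times> nat) set" where
  "succ_rel = {(n, Suc n) | n. True}"

definition is_path :: "('a \<times> 'a) set \<Rightarrow> (nat \<Rightarrow> 'a) \<Rightarrow> bool" where
  "is_path R \<pi> \<longleftrightarrow> continuous_clos (clos succ_rel) (clos R) \<pi>"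

datatype 'p slcs =
    Atom 'p
  | Neg "'p slcs"
  | Or "'p slcs" "'p slcs"
  | RhoF "'p slcs" "'p slcs"
  | RhoB "'p slcs" "'p slcs"

fun sat :: "('a \<times> 'a) set \<Rightarrow> ('p \<Rightarrow> 'a set) \<Rightarrow> 'a \<Rightarrow> 'p slcs \<Rightarrow> bool" where
  "sat R V x (Atom p) \<longleftrightarrow> x \<in> V p"
| "sat R V x (Neg \<Phi>) \<longleftrightarrow> \<not> sat R V x \<Phi>"
| "sat R V x (Or \<Phi>1 \<Phi>2) \<longleftrightarrow> sat R V x \<Phi>1 \<or> sat R V x \<Phi>2"
| "sat R V x (RhoF \<Phi>1 \<Phi>2) \<longleftrightarrow>
     (\<exists>\<pi> l. is_path R \<pi> \<and> \<pi> 0 = x \<and> sat R V (\<pi> l) \<Phi>1 \<and> (\<forall>j. 0 < j \<and> j < l \<longrightarrow> sat R V (\<pi> j) \<Phi>2))"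
| "sat R V x (RhoB \<Phi>1 \<Phi>2) \<longleftrightarrow>
     (\<exists>\<pi> l. is_path R \<pi> \<and> \<pi> l = x \<and> sat R V (\<pi> 0) \<Phi>1 \<and> (\<forall>j. 0 < j \<and> j < l \<longrightarrow> sat R V (\<pi> j) \<Phi>2))"

definition slcs_equiv :: "('a \<times> 'a) set \<Rightarrow> ('p \<Rightarrow> 'a set) \<Rightarrow> 'a \<Rightarrow> 'a \<Rightarrow> bool" where
  "slcs_equiv R V x1 x2 \<longleftrightarrow> (\<forall>\<Phi>. sat R V x1 \<Phi> \<longleftrightarrow> sat R V x2 \<Phi>)"

definition class_bisim :: "('a \<times> 'a) set \<Rightarrow> ('p \<Rightarrow> 'a set) \<Rightarrow> ('a \<times> 'a) set \<Rightarrow> bool" where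
  "class_bisim R V B \<longleftrightarrow> B \<noteq> {} \<and> equiv UNIV B \<and>
     (\<forall>(x1, x2)\<in>B. Vinv V x1 = Vinv V x2 \<and>
        (\<forall>C\<in>UNIV // B.
           (fwd_clos R x1 \<inter> C \<noteq> {} \<longleftrightarrow> fwd_clos R x2 \<inter> C \<noteq> {}) \<and>
           (bwd_clos R x1 \<inter> C \<noteq> {} \<longleftrightarrow> bwd_clos R x2 \<inter> C \<noteq> {})))"

definition cbisimilar :: "('a \<times> 'a) set \<Rightarrow> ('p \<Rightarrow> 'a set) \<Rightarrow> 'a \<Rightarrow> 'a \<Rightarrow> bool" where
  "cbisimilar R V x1 x2 \<longleftrightarrow> (x1, x2) \<in> \<Union>{B. class_bisim R V B}"

end

theory Submission
  imports Defs
begin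

text \<open>The formula \<open>\<rho>\<^sup>\<rightarrow> \<phi>[false]\<close> holds at x exactly when \<phi> holds somewhere in the one-step
  closure of x, and dually for \<open>\<rho>\<^sup>\<leftarrow>\<close>: these are the diamond modalities of the closure.
  If x1 and x2 are logically equivalent and the closure of x1 meets the equivalence class
  of c, then so does that of x2; otherwise, the closure of x2 being finite, a finite
  conjunction yields a formula true at c and false throughout the closure of x2, and its
  diamond separates x1 from x2. Hence logical equivalence is a class-based bisimulation.\<close>

lemma self_in_fwd_clos: "x \<in> fwd_clos R x"
  by (simp add: fwd_clos_def clos_def)

lemma fwd_clos_iff: "y \<in> fwd_clos R x \<longleftrightarrow> y = x \<or> (x, y) \<in> R"
  by (auto simp: fwd_clos_def clos_def)

lemma bwd_clos_iff_fwd_clos: "y \<in> bwd_clos R x \<longleftrightarrow> x \<in> fwd_clos R y"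
  by (auto simp: bwd_clos_def fwd_clos_def clos_def)

lemma is_path_iff: "is_path R \<pi> \<longleftrightarrow> (\<forall>n. \<pi> (Suc n) \<in> fwd_clos R (\<pi> n))"
proof
  assume "is_path R \<pi>"
  show "\<forall>n. \<pi> (Suc n) \<in> fwd_clos R (\<pi> n)"
  proof
    fix n
    have "Suc n \<in> clos succ_rel {n}" by (simp add: clos_def succ_rel_def)
    then show "\<pi> (Suc n) \<in> fwd_clos R (\<pi> n)"
      using \<open>is_path R \<pi>\<close> unfolding is_path_def continuous_clos_def fwd_clos_def by fastforce
  qed
next
  assume step: "\<forall>n. \<pi> (Suc n) \<in> fwd_clos R (\<pi> n)"
  show "is_path R \<pi>"
    unfolding is_path_def continuous_clos_def
  proof (intro allI subsetI)
    fix A y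
    assume "y \<in> \<pi> ` clos succ_rel A"
    then obtain m where "m \<in> A \<or> (\<exists>a\<in>A. m = Suc a)" and "y = \<pi> m"
      by (auto simp: clos_def succ_rel_def)
    then show "y \<in> clos R (\<pi> ` A)"
      using step by (auto simp: clos_def fwd_clos_iff)
  qed
qed

lemma two_point_path:
  assumes "y \<in> fwd_clos R x"
  shows "is_path R (\<lambda>n. if n = 0 then x else y)"
  using assms by (simp add: is_path_iff self_in_fwd_clos)

lemma path_step_bounded:
  assumes "is_path R \<sigma>" and "l \<le> 1"
  shows "\<sigma> l \<in> fwd_clos R (\<sigma> 0)"
  using assms by (cases l) (auto simp: is_path_iff self_in_fwd_clos)

definition slcs_true :: "'p slcs" where
  "slcs_true = Or (Atom undefined) (Neg (Atom undefined))"

definition slcs_false :: "'p slcs" where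
  "slcs_false = Neg slcs_true"

definition slcs_and :: "'p slcs \<Rightarrow> 'p slcs \<Rightarrow> 'p slcs" where
  "slcs_and \<phi> \<psi> = Neg (Or (Neg \<phi>) (Neg \<psi>))"

lemma sat_slcs_true [simp]: "sat R V x slcs_true"
  by (simp add: slcs_true_def)

lemma sat_slcs_false [simp]: "\<not> sat R V x slcs_false"
  by (simp add: slcs_false_def)

lemma sat_slcs_and [simp]: "sat R V x (slcs_and \<phi> \<psi>) \<longleftrightarrow> sat R V x \<phi> \<and> sat R V x \<psi>"
  by (simp add: slcs_and_def)

lemma no_intermediate_steps:
  fixes \<sigma> :: "nat \<Rightarrow> 'a"
  assumes "\<forall>j. 0 < j \<and> j < l \<longrightarrow> sat R V (\<sigma> j) slcs_false"
  shows "l \<le> 1"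
  using assms[rule_format, of 1] by (cases "l \<le> 1") simp_all

lemma sat_RhoF_false_iff: "sat R V x (RhoF \<phi> slcs_false) \<longleftrightarrow> (\<exists>y\<in>fwd_clos R x. sat R V y \<phi>)"
proof
  assume "sat R V x (RhoF \<phi> slcs_false)"
  then obtain \<sigma> l where "is_path R \<sigma>" "\<sigma> 0 = x" "sat R V (\<sigma> l) \<phi>"
      and "\<forall>j. 0 < j \<and> j < l \<longrightarrow> sat R V (\<sigma> j) slcs_false"
    by auto
  then show "\<exists>y\<in>fwd_clos R x. sat R V y \<phi>"
    using path_step_bounded no_intermediate_steps by metis
next
  assume "\<exists>y\<in>fwd_clos R x. sat R V y \<phi>"
  then obtain y where "y \<in> fwd_clos R x" "sat R V y \<phi>" by blast
  then show "sat R V x (RhoF \<phi> slcs_false)"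
    using two_point_path by (fastforce intro!: exI[of _ "Suc 0"])
qed

lemma sat_RhoB_false_iff: "sat R V x (RhoB \<phi> slcs_false) \<longleftrightarrow> (\<exists>y\<in>bwd_clos R x. sat R V y \<phi>)"
proof
  assume "sat R V x (RhoB \<phi> slcs_false)"
  then obtain \<sigma> l where "is_path R \<sigma>" "\<sigma> l = x" "sat R V (\<sigma> 0) \<phi>"
      and "\<forall>j. 0 < j \<and> j < l \<longrightarrow> sat R V (\<sigma> j) slcs_false"
    by auto
  then show "\<exists>y\<in>bwd_clos R x. sat R V y \<phi>"
    using path_step_bounded no_intermediate_steps bwd_clos_iff_fwd_clos by metis
next
  assume "\<exists>y\<in>bwd_clos R x. sat R V y \<phi>"
  then obtain y where "x \<in> fwd_clos R y" "sat R V y \<phi>"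
    by (auto simp: bwd_clos_iff_fwd_clos)
  then show "sat R V x (RhoB \<phi> slcs_false)"
    using two_point_path by (fastforce intro!: exI[of _ "Suc 0"])
qed

lemma slcs_equiv_rel_nonempty: "{(a, b). slcs_equiv R V a b} \<noteq> {}"
  by (auto simp: slcs_equiv_def)

lemma slcs_equiv_sym: "slcs_equiv R V a b \<Longrightarrow> slcs_equiv R V b a"
  by (simp add: slcs_equiv_def)

lemma equiv_slcs_equiv: "equiv UNIV {(a, b). slcs_equiv R V a b}"
  by (auto simp: equiv_def refl_on_def sym_def trans_def slcs_equiv_def)

lemma slcs_equiv_imp_Vinv_eq: "slcs_equiv R V a b \<Longrightarrow> Vinv V a = Vinv V b"
  by (auto simp: Vinv_def slcs_equiv_def dest: spec[of _ "Atom _"])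

lemma exists_formula_separating_finite_set:
  assumes "finite S" and "\<forall>y\<in>S. \<not> slcs_equiv R V c y"
  shows "\<exists>\<phi>. sat R V c \<phi> \<and> (\<forall>y\<in>S. \<not> sat R V y \<phi>)"
  using assms
proof (induction S rule: finite_induct)
  case empty
  show ?case by (intro exI[of _ slcs_true]) simp
next
  case (insert y S)
  then obtain \<phi> where "sat R V c \<phi>" "\<forall>z\<in>S. \<not> sat R V z \<phi>" by auto
  moreover obtain \<psi> where "sat R V c \<psi>" "\<not> sat R V y \<psi>"
  proof -
    obtain \<chi> where "sat R V c \<chi> \<noteq> sat R V y \<chi>"
      using insert.prems by (auto simp: slcs_equiv_def)
    then show thesis
      using that[of \<chi>] that[of "Neg \<chi>"] by auto
  qed
  ultimately show ?case by (intro exI[of _ "slcs_and \<phi> \<psi>"]) auto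
qed

lemma slcs_equiv_transfers_class_meeting:
  assumes finite: "finite (N x2)"
    and diamond: "\<And>\<phi> x. sat R V x (D \<phi>) \<longleftrightarrow> (\<exists>y\<in>N x. sat R V y \<phi>)"
    and equiv: "slcs_equiv R V x1 x2"
    and meets: "y \<in> N x1" "slcs_equiv R V c y"
  shows "\<exists>z\<in>N x2. slcs_equiv R V c z"
proof (rule ccontr)
  assume "\<not> ?thesis"
  then obtain \<phi> where "sat R V c \<phi>" and not_near_x2: "\<forall>z\<in>N x2. \<not> sat R V z \<phi>"
    using exists_formula_separating_finite_set[OF finite] by blast
  then have "sat R V y \<phi>"
    using meets(2) by (simp add: slcs_equiv_def)
  have "sat R V x1 (D \<phi>)"
    using diamond meets(1) \<open>sat R V y \<phi>\<close> by blast
  then have "sat R V x2 (D \<phi>)"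
    using equiv by (simp add: slcs_equiv_def)
  then show False
    using diamond not_near_x2 by blast
qed

lemma slcs_equiv_class_meeting_iff:
  assumes finite: "finite (N x1)" "finite (N x2)"
    and diamond: "\<And>\<phi> x. sat R V x (D \<phi>) \<longleftrightarrow> (\<exists>y\<in>N x. sat R V y \<phi>)"
    and equiv: "slcs_equiv R V x1 x2"
    and C_class: "C \<in> UNIV // {(a, b). slcs_equiv R V a b}"
  shows "N x1 \<inter> C \<noteq> {} \<longleftrightarrow> N x2 \<inter> C \<noteq> {}"
proof -
  obtain c where C: "C = {y. slcs_equiv R V c y}"
    using C_class unfolding quotient_def by auto
  have "\<exists>z\<in>N x2. slcs_equiv R V c z" if "y \<in> N x1" "slcs_equiv R V c y" for y
    using slcs_equiv_transfers_class_meeting[OF finite(2) diamond equiv that] .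
  moreover have "\<exists>z\<in>N x1. slcs_equiv R V c z" if "y \<in> N x2" "slcs_equiv R V c y" for y
    using slcs_equiv_transfers_class_meeting[OF finite(1) diamond slcs_equiv_sym[OF equiv] that] .
  ultimately show ?thesis
    unfolding C by blast
qed

lemma class_bisim_slcs_equiv:
  assumes "finitely_closed R" and "finitely_backward_closed R"
  shows "class_bisim R V {(a, b). slcs_equiv R V a b}"
  unfolding class_bisim_def
proof (intro conjI slcs_equiv_rel_nonempty equiv_slcs_equiv ballI, clarify)
  have finite: "finite (fwd_clos R x)" "finite (bwd_clos R x)" for x
    using assms by (simp_all add: finitely_closed_def finitely_backward_closed_def)
  fix a b assume equiv: "slcs_equiv R V a b"
  have "(fwd_clos R a \<inter> C \<noteq> {} \<longleftrightarrow> fwd_clos R b \<inter> C \<noteq> {}) \<and>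
        (bwd_clos R a \<inter> C \<noteq> {} \<longleftrightarrow> bwd_clos R b \<inter> C \<noteq> {})"
    if "C \<in> UNIV // {(a, b). slcs_equiv R V a b}" for C
    using slcs_equiv_class_meeting_iff[OF finite(1) finite(1) sat_RhoF_false_iff equiv that]
      slcs_equiv_class_meeting_iff[OF finite(2) finite(2) sat_RhoB_false_iff equiv that]
    by blast
  then show "Vinv V a = Vinv V b \<and>
      (\<forall>C\<in>UNIV // {(a, b). slcs_equiv R V a b}.
         (fwd_clos R a \<inter> C \<noteq> {} \<longleftrightarrow> fwd_clos R b \<inter> C \<noteq> {}) \<and>
         (bwd_clos R a \<inter> C \<noteq> {} \<longleftrightarrow> bwd_clos R b \<inter> C \<noteq> {}))"
    using slcs_equiv_imp_Vinv_eq[OF equiv] by blast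
qed

theorem lemma4:
  fixes R :: "('a \<times> 'a) set" and V :: "'p \<Rightarrow> 'a set"
  assumes "finitely_closed R" and "finitely_backward_closed R"
  shows "\<forall>x1 x2. slcs_equiv R V x1 x2 \<longrightarrow> cbisimilar R V x1 x2"
  using class_bisim_slcs_equiv[OF assms, of V] by (auto simp: cbisimilar_def)

end
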